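(* In the setting described in the context, let $\{x_k\}_{k\geq 0}$ be the random iterates generated by UCDC$(x_0)$. Then for every $k$, $$\mathbf{E}[F(x_{k+1})-F^*\mid x_k]\leq \frac{1}{n}\big(H(x_k,T(x_k))-F^*\big)+\frac{n-1}{n}\big(F(x_k)-F^*\big).$$
   Context: Let $U\in\mathbf{R}^{N\times N}$ be a column permutation of the $N\times N$ identity matrix, partitioned as $U=[U_1,\dots,U_n]$ with $U_i\in\mathbf{R}^{N\times N_i}$, $\sum_i N_i=N$. For $x\in\mathbf{R}^N$ write $x^{(i)}=U_i^Tx\in\mathbf{R}^{N_i}$, so $x=\sum_i U_ix^{(i)}$. Each $\mathbf{R}^{N_i}$ carries the norm $\|t\|_{(i)}=\langle B_it,t\rangle^{1/2}$ and dual norm $\|t\|_{(i)}^*=\langle B_i^{-1}t,t\rangle^{1/2}$, where $B_i$ is positive definite. Consider minimizing $F(x)=f(x)+\Psi(x)$ over $\mathbf{R}^N$, where $f$ is convex and differentiable with block-coordinate Lipschitz gradient: there are constants $L_1,\dots,L_n>0$ with $\|\nabla_if(x+U_it)-\nabla_if(x)\|_{(i)}^*\leq L_i\|t\|_{(i)}$ for all $x\in\mathbf{R}^N$, $t\in\mathbf{R}^{N_i}$, $i$, where $\nabla_if(x)=U_i^T\nabla f(x)$; and $\Psi(x)=\sum_{i=1}^n\Psi_i(x^{(i)})$ with each $\Psi_i$ a proper closed convex extended-real-valued function. The problem is assumed to have a minimizer; $F^*$ is the optimal value. Let $L=\mathrm{Diag}(L_1,\dots,L_n)$ and $\|x\|_L=(\sum_i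 L_i\|x^{(i)}\|_{(i)}^2)^{1/2}$. Define $V_i(x,t)=\langle\nabla_if(x),t\rangle+\frac{L_i}{2}\|t\|_{(i)}^2+\Psi_i(x^{(i)}+t)$, $T^{(i)}(x)=\arg\min_{t\in\mathbf{R}^{N_i}}V_i(x,t)$, $T(x)=\sum_iU_iT^{(i)}(x)\in\mathbf{R}^N$, and $H(x,T)=f(x)+\langle\nabla f(x),T\rangle+\frac12\|T\|_L^2+\Psi(x+T)$. Algorithm UCDC$(x_0)$: for $k=0,1,2,\dots$, choose $i_k=i\in\{1,\dots,n\}$ uniformly at random (probability $1/n$ each, independently of the past) and set $x_{k+1}=x_k+U_iT^{(i)}(x_k)$. *)

theory Defs
  imports "HOL-Analysis.Analysis"
begin

text \<open>Blocks: the column permutation U of the identity partitioned into U_1..U_n is encoded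
by the block-assignment map blk of coordinates (blocks indexed 0..n-1). A vector t of R^{N_i}
is represented by U_i t, i.e. a vector of R^N supported on block i; x^{(i)} is represented by
U_i U_i^T x = bproj blk i x.  B i is an N x N matrix whose block (i,i) part is B_i.\<close>

definition blockvec :: "('N \<Rightarrow> nat) \<Rightarrow> nat \<Rightarrow> real^'N \<Rightarrow> bool" where
  "blockvec blk i t \<longleftrightarrow> (\<forall>j. blk j \<noteq> i \<longrightarrow> t $ j = 0)"

definition bproj :: "('N \<Rightarrow> nat) \<Rightarrow> nat \<Rightarrow> real^'N \<Rightarrow> real^'N" where
  "bproj blk i x = (\<chi> j. if blk j = i then x $ j else 0)"

definition bnorm :: "(nat \<Rightarrow> real^'N^'N) \<Rightarrow> nat \<Rightarrow> real^'N \<Rightarrow> real" where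
  "bnorm B i t = sqrt ((B i *v t) \<bullet> t)"

text \<open>dual block norm  ||s||*_(i) = <B_i^{-1} s, s>^(1/2); B_i^{-1} s is the unique block
vector v with B_i v = s (block part).\<close>
definition bdual :: "('N \<Rightarrow> nat) \<Rightarrow> (nat \<Rightarrow> real^'N^'N) \<Rightarrow> nat \<Rightarrow> real^'N \<Rightarrow> real" where
  "bdual blk B i s =
     sqrt ((THE v. blockvec blk i v \<and> bproj blk i (B i *v v) = s) \<bullet> s)"

definition Psi_sum :: "nat \<Rightarrow> ('N \<Rightarrow> nat) \<Rightarrow> (nat \<Rightarrow> real^'N \<Rightarrow> ereal) \<Rightarrow> real^'N \<Rightarrow> ereal" where
  "Psi_sum n blk Psi x = (\<Sum>i<n. Psi i (bproj blk i x))"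

definition Fobj :: "nat \<Rightarrow> ('N \<Rightarrow> nat) \<Rightarrow> (real^'N \<Rightarrow> real) \<Rightarrow> (nat \<Rightarrow> real^'N \<Rightarrow> ereal)
     \<Rightarrow> real^'N \<Rightarrow> ereal" where
  "Fobj n blk f Psi x = ereal (f x) + Psi_sum n blk Psi x"

definition Fstar :: "nat \<Rightarrow> ('N \<Rightarrow> nat) \<Rightarrow> (real^'N \<Rightarrow> real) \<Rightarrow> (nat \<Rightarrow> real^'N \<Rightarrow> ereal) \<Rightarrow> ereal" where
  "Fstar n blk f Psi = (INF x. Fobj n blk f Psi x)"

definition Vblk :: "('N \<Rightarrow> nat) \<Rightarrow> (nat \<Rightarrow> real^'N^'N) \<Rightarrow> (nat \<Rightarrow> real) \<Rightarrow> (real^'N \<Rightarrow> real^'N)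
     \<Rightarrow> (nat \<Rightarrow> real^'N \<Rightarrow> ereal) \<Rightarrow> nat \<Rightarrow> real^'N \<Rightarrow> real^'N \<Rightarrow> ereal" where
  "Vblk blk B L grad Psi i x t =
     ereal (bproj blk i (grad x) \<bullet> t + L i / 2 * (bnorm B i t)\<^sup>2) + Psi i (bproj blk i x + t)"

definition Tblk :: "('N \<Rightarrow> nat) \<Rightarrow> (nat \<Rightarrow> real^'N^'N) \<Rightarrow> (nat \<Rightarrow> real) \<Rightarrow> (real^'N \<Rightarrow> real^'N)
     \<Rightarrow> (nat \<Rightarrow> real^'N \<Rightarrow> ereal) \<Rightarrow> nat \<Rightarrow> real^'N \<Rightarrow> real^'N" where
  "Tblk blk B L grad Psi i x =
     (THE t. blockvec blk i t \<and>
        (\<forall>s. blockvec blk i s \<longrightarrow> Vblk blk B L grad Psi i x t \<le> Vblk blk B L grad Psi i x s))"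

definition Tfull :: "nat \<Rightarrow> ('N \<Rightarrow> nat) \<Rightarrow> (nat \<Rightarrow> real^'N^'N) \<Rightarrow> (nat \<Rightarrow> real) \<Rightarrow> (real^'N \<Rightarrow> real^'N)
     \<Rightarrow> (nat \<Rightarrow> real^'N \<Rightarrow> ereal) \<Rightarrow> real^'N \<Rightarrow> real^'N" where
  "Tfull n blk B L grad Psi x = (\<Sum>i<n. Tblk blk B L grad Psi i x)"

definition normL_sq :: "nat \<Rightarrow> ('N \<Rightarrow> nat) \<Rightarrow> (nat \<Rightarrow> real^'N^'N) \<Rightarrow> (nat \<Rightarrow> real) \<Rightarrow> real^'N \<Rightarrow> real" where
  "normL_sq n blk B L x = (\<Sum>i<n. L i * (bnorm B i (bproj blk i x))\<^sup>2)"

definition Hfun :: "nat \<Rightarrow> ('N \<Rightarrow> nat) \<Rightarrow> (nat \<Rightarrow> real^'N^'N) \<Rightarrow> (nat \<Rightarrow> real) \<Rightarrow> (real^'N \<Rightarrow> real)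
     \<Rightarrow> (real^'N \<Rightarrow> real^'N) \<Rightarrow> (nat \<Rightarrow> real^'N \<Rightarrow> ereal) \<Rightarrow> real^'N \<Rightarrow> real^'N \<Rightarrow> ereal" where
  "Hfun n blk B L f grad Psi x T =
     ereal (f x + grad x \<bullet> T + 1/2 * normL_sq n blk B L T) + Psi_sum n blk Psi (x + T)"

text \<open>Iterates of UCDC(x0) along a realisation idx of the random block choices i_0, i_1, ...\<close>
primrec ucdc :: "('N \<Rightarrow> nat) \<Rightarrow> (nat \<Rightarrow> real^'N^'N) \<Rightarrow> (nat \<Rightarrow> real) \<Rightarrow> (real^'N \<Rightarrow> real^'N)
     \<Rightarrow> (nat \<Rightarrow> real^'N \<Rightarrow> ereal) \<Rightarrow> real^'N \<Rightarrow> (nat \<Rightarrow> nat) \<Rightarrow> nat \<Rightarrow> real^'N" where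
  "ucdc blk B L grad Psi x0 idx 0 = x0"
| "ucdc blk B L grad Psi x0 idx (Suc k) =
     ucdc blk B L grad Psi x0 idx k + Tblk blk B L grad Psi (idx k) (ucdc blk B L grad Psi x0 idx k)"

end

theory Submission
  imports Defs
begin

text \<open>Fix x and write t_i = U_i T^(i)(x). The block descent lemma bounds f(x + t_i) by the model
  f(x) + \<langle>\<nabla>_i f(x), t_i\<rangle> + L_i/2 \<parallel>t_i\<parallel>^2, and by separability the step changes only the
  i-th summand of \<Psi>. Averaging over the n equally likely blocks, every model term and every
  \<Psi>_i(x^(i) + t_i) occurs once, which adds up to H(x, T(x)), while every \<Psi>_j(x^(j)) occurs
  n - 1 times, which gives the weight (n - 1)/n of F(x).\<close>

lemma blockvec_bproj: "blockvec blk i (bproj blk i x)"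
  by (simp add: blockvec_def bproj_def)

lemma blockvec_iff_bproj_eq: "blockvec blk i t \<longleftrightarrow> bproj blk i t = t"
  by (auto simp: blockvec_def bproj_def vec_eq_iff)

lemma bproj_blockvec_other: "blockvec blk i t \<Longrightarrow> j \<noteq> i \<Longrightarrow> bproj blk j t = 0"
  by (auto simp: blockvec_def bproj_def vec_eq_iff)

lemma bproj_add: "bproj blk i (x + y) = bproj blk i x + bproj blk i y"
  by (auto simp: bproj_def vec_eq_iff)

lemma bproj_diff: "bproj blk i (x - y) = bproj blk i x - bproj blk i y"
  by (auto simp: bproj_def vec_eq_iff)

lemma bproj_scaleR: "bproj blk i (a *\<^sub>R x) = a *\<^sub>R bproj blk i x"
  by (auto simp: bproj_def vec_eq_iff)

lemma linear_bproj: "linear (bproj blk i)"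
  by (rule linearI) (simp_all add: bproj_add bproj_scaleR)

lemma bproj_sum: "bproj blk i (sum g A) = (\<Sum>j\<in>A. bproj blk i (g j))"
  using linear_sum[OF linear_bproj] .

lemma blockvec_add: "blockvec blk i u \<Longrightarrow> blockvec blk i v \<Longrightarrow> blockvec blk i (u + v)"
  by (simp add: blockvec_def)

lemma blockvec_diff: "blockvec blk i u \<Longrightarrow> blockvec blk i v \<Longrightarrow> blockvec blk i (u - v)"
  by (simp add: blockvec_def)

lemma blockvec_scaleR: "blockvec blk i u \<Longrightarrow> blockvec blk i (a *\<^sub>R u)"
  by (simp add: blockvec_def)

lemma inner_blockvec_bproj: "blockvec blk i t \<Longrightarrow> g \<bullet> t = bproj blk i g \<bullet> t"
  by (auto simp: blockvec_def bproj_def inner_vec_def intro!: sum.cong)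

lemma closed_blockvec: "closed {t. blockvec blk i t}"
proof -
  have "continuous_on UNIV (bproj blk i)"
    by (simp add: linear_bproj linear_continuous_on linear_linear)
  then have "closed {t. bproj blk i t = id t}"
    by (intro closed_Collect_eq) (auto intro: continuous_on_id)
  then show ?thesis by (simp add: blockvec_iff_bproj_eq)
qed

lemma convex_blockvec: "convex {t. blockvec blk i t}"
  by (auto simp: convex_def intro!: blockvec_add blockvec_scaleR)

lemma bproj_sum_blockvecs:
  assumes "\<forall>l<n. blockvec blk l (t l)" and "j < n"
  shows "bproj blk j (\<Sum>l<n. t l) = t j"
proof -
  have "bproj blk j (\<Sum>l<n. t l) = (\<Sum>l<n. if l = j then t j else 0)"
    unfolding bproj_sum using assms
    by (intro sum.cong refl) (auto simp: bproj_blockvec_other blockvec_iff_bproj_eq)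
  then show ?thesis using assms(2) by simp
qed

section \<open>Block quadratic forms\<close>

definition block_symmetric :: "('N::finite \<Rightarrow> nat) \<Rightarrow> nat \<Rightarrow> real^'N^'N \<Rightarrow> bool" where
  "block_symmetric blk i M \<longleftrightarrow> (\<forall>j l. blk j = i \<longrightarrow> blk l = i \<longrightarrow> M $ j $ l = M $ l $ j)"

definition block_posdef :: "('N::finite \<Rightarrow> nat) \<Rightarrow> nat \<Rightarrow> real^'N^'N \<Rightarrow> bool" where
  "block_posdef blk i M \<longleftrightarrow> (\<forall>t. blockvec blk i t \<and> t \<noteq> 0 \<longrightarrow> (M *v t) \<bullet> t > 0)"

lemma block_posdef_nonneg: "block_posdef blk i M \<Longrightarrow> blockvec blk i t \<Longrightarrow> (M *v t) \<bullet> t \<ge> 0"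
  unfolding block_posdef_def by (cases "t = 0") (auto intro: less_imp_le)

lemma block_symmetric_inner_commute:
  assumes S: "block_symmetric blk i M" and u: "blockvec blk i u" and v: "blockvec blk i v"
  shows "(M *v u) \<bullet> v = (M *v v) \<bullet> u"
proof -
  have entry: "M $ j $ l * u $ l * v $ j = M $ l $ j * u $ l * v $ j" for j l
    using S u v by (cases "blk j = i"; cases "blk l = i") (auto simp: block_symmetric_def blockvec_def)
  have "(M *v u) \<bullet> v = (\<Sum>j\<in>UNIV. \<Sum>l\<in>UNIV. M $ j $ l * u $ l * v $ j)"
    by (simp add: inner_vec_def matrix_vector_mult_def sum_distrib_right)
  also have "\<dots> = (\<Sum>j\<in>UNIV. \<Sum>l\<in>UNIV. M $ l $ j * u $ l * v $ j)"
    by (intro sum.cong refl entry)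
  also have "\<dots> = (\<Sum>l\<in>UNIV. \<Sum>j\<in>UNIV. M $ l $ j * v $ j * u $ l)"
    by (subst sum.swap) (simp add: mult_ac)
  also have "\<dots> = (M *v v) \<bullet> u"
    by (simp add: inner_vec_def matrix_vector_mult_def sum_distrib_right)
  finally show ?thesis .
qed

lemma block_quadratic_combination:
  assumes "block_symmetric blk i M" and "blockvec blk i u" and "blockvec blk i v"
  shows "(M *v (a *\<^sub>R u + b *\<^sub>R v)) \<bullet> (a *\<^sub>R u + b *\<^sub>R v)
     = a\<^sup>2 * ((M *v u) \<bullet> u) + 2 * a * b * ((M *v u) \<bullet> v) + b\<^sup>2 * ((M *v v) \<bullet> v)"
  using block_symmetric_inner_commute[OF assms]
  by (simp add: matrix_vector_right_distrib matrix_vector_mult_scaleR inner_add_left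
      inner_add_right power2_eq_square algebra_simps)

lemma block_quadratic_cauchy_schwarz:
  assumes S: "block_symmetric blk i M" and pd: "block_posdef blk i M"
    and u: "blockvec blk i u" and v: "blockvec blk i v"
  shows "(M *v u) \<bullet> v \<le> sqrt ((M *v u) \<bullet> u) * sqrt ((M *v v) \<bullet> v)"
proof (cases "u = 0 \<or> v = 0")
  case True
  then show ?thesis by auto
next
  case False
  have qu: "(M *v u) \<bullet> u > 0" and qv: "(M *v v) \<bullet> v > 0"
    using pd u v False by (auto simp: block_posdef_def)
  define a where "a = sqrt ((M *v v) \<bullet> v)"
  define b where "b = sqrt ((M *v u) \<bullet> u)"
  have a2: "a\<^sup>2 = (M *v v) \<bullet> v" and b2: "b\<^sup>2 = (M *v u) \<bullet> u"
    using qu qv by (simp_all add: a_def b_def)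
  have "0 < a" "0 < b" using qu qv by (simp_all add: a_def b_def)
  have "0 \<le> (M *v (a *\<^sub>R u + (-b) *\<^sub>R v)) \<bullet> (a *\<^sub>R u + (-b) *\<^sub>R v)"
    by (intro block_posdef_nonneg[OF pd] blockvec_add blockvec_scaleR u v)
  also have "\<dots> = a\<^sup>2 * b\<^sup>2 - 2 * a * b * ((M *v u) \<bullet> v) + b\<^sup>2 * a\<^sup>2"
    by (subst block_quadratic_combination[OF S u v]) (simp add: a2 b2)
  finally have "2 * (a * b) * ((M *v u) \<bullet> v) \<le> 2 * (a * b) * (a * b)"
    by (simp add: power2_eq_square algebra_simps)
  then have "(M *v u) \<bullet> v \<le> a * b"
    using \<open>0 < a\<close> \<open>0 < b\<close> by simp
  then show ?thesis by (simp add: a_def b_def mult.commute)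
qed

lemma block_quadratic_midpoint_less:
  assumes S: "block_symmetric blk i M" and pd: "block_posdef blk i M"
    and u: "blockvec blk i u" and v: "blockvec blk i v" and "u \<noteq> v"
  shows "(M *v ((1/2) *\<^sub>R u + (1/2) *\<^sub>R v)) \<bullet> ((1/2) *\<^sub>R u + (1/2) *\<^sub>R v)
     < ((M *v u) \<bullet> u + (M *v v) \<bullet> v) / 2"
proof -
  have "0 < (M *v (1 *\<^sub>R u + (-1) *\<^sub>R v)) \<bullet> (1 *\<^sub>R u + (-1) *\<^sub>R v)"
    using pd u v \<open>u \<noteq> v\<close> by (simp add: block_posdef_def blockvec_diff)
  then show ?thesis
    unfolding block_quadratic_combination[OF S u v] by (simp add: power2_eq_square)
qed

lemma bnorm_scaleR: "bnorm B i (a *\<^sub>R t) = \<bar>a\<bar> * bnorm B i t"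
proof -
  have "(B i *v (a *\<^sub>R t)) \<bullet> (a *\<^sub>R t) = a\<^sup>2 * ((B i *v t) \<bullet> t)"
    by (simp add: matrix_vector_mult_scaleR power2_eq_square)
  then show ?thesis by (simp add: bnorm_def real_sqrt_mult)
qed

lemma bnorm_power2: "block_posdef blk i (B i) \<Longrightarrow> blockvec blk i t \<Longrightarrow> (bnorm B i t)\<^sup>2 = (B i *v t) \<bullet> t"
  unfolding bnorm_def by (simp add: block_posdef_nonneg)

lemma block_posdef_coercive:
  assumes pd: "block_posdef blk i M"
  shows "\<exists>\<mu>>0. \<forall>t. blockvec blk i t \<longrightarrow> \<mu> * (norm t)\<^sup>2 \<le> (M *v t) \<bullet> t"
proof -
  define K where "K = {t. blockvec blk i t} \<inter> sphere 0 1"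
  have unit: "(1 / norm t) *\<^sub>R t \<in> K" if "blockvec blk i t" "t \<noteq> 0" for t
    using that by (auto simp: K_def blockvec_scaleR)
  show ?thesis
  proof (cases "K = {}")
    case True
    then have "t = 0" if "blockvec blk i t" for t using unit[OF that] by blast
    then show ?thesis by (intro exI[of _ 1]) force
  next
    case False
    have "compact K" unfolding K_def by (rule closed_Int_compact[OF closed_blockvec compact_sphere])
    moreover have "continuous_on K (\<lambda>t. (M *v t) \<bullet> t)" by (intro continuous_intros)
    ultimately obtain t1 where t1: "t1 \<in> K" "\<forall>t\<in>K. (M *v t1) \<bullet> t1 \<le> (M *v t) \<bullet> t"
      using continuous_attains_inf[OF _ False] by blast
    define \<mu> where "\<mu> = (M *v t1) \<bullet> t1"
    have "\<mu> > 0" using t1(1) pd by (auto simp: K_def \<mu>_def block_posdef_def)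
    moreover have "\<mu> * (norm t)\<^sup>2 \<le> (M *v t) \<bullet> t" if t: "blockvec blk i t" for t
    proof (cases "t = 0")
      case False
      have "\<mu> \<le> (M *v ((1 / norm t) *\<^sub>R t)) \<bullet> ((1 / norm t) *\<^sub>R t)"
        using t1(2) unit[OF t False] unfolding \<mu>_def by blast
      also have "\<dots> = ((M *v t) \<bullet> t) / (norm t)\<^sup>2"
        by (simp add: matrix_vector_mult_scaleR power2_eq_square)
      finally show ?thesis using False by (simp add: field_simps)
    qed simp
    ultimately show ?thesis by blast
  qed
qed

lemma block_solve_ex1:
  assumes pd: "block_posdef blk i M" and s: "blockvec blk i s"
  shows "\<exists>!v. blockvec blk i v \<and> bproj blk i (M *v v) = s"
proof -
  let ?P = "bproj blk i"
  have kernel: "v = 0" if "blockvec blk i v" "?P (M *v v) = 0" for v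
    using that pd inner_blockvec_bproj[OF that(1), of "M *v v"]
    by (auto simp: block_posdef_def)
  \<comment> \<open>G is the block (i,i) part of M on block i and the identity on the other coordinates.\<close>
  define G where "G = (\<lambda>w. ?P (M *v ?P w) + (w - ?P w))"
  have G_block: "G w $ j = (if blk j = i then ?P (M *v ?P w) $ j else w $ j)" for w j
    by (simp add: G_def bproj_def)
  have lin: "linear G"
  proof -
    have "linear (\<lambda>w. ?P (M *v ?P w))"
      using linear_compose[OF linear_compose[OF linear_bproj matrix_vector_mul_linear] linear_bproj]
      by (simp add: o_def)
    then show ?thesis
      unfolding G_def by (intro linear_compose_add linear_compose_sub linear_ident linear_bproj)
  qed
  have "inj G"
  proof (rule linear_injective_0[OF lin, THEN iffD2], intro allI impI)
    fix w assume "G w = 0"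
    then have "w = ?P w" and "?P (M *v ?P w) = 0"
      using G_block[of w] by (auto simp: vec_eq_iff bproj_def split: if_splits)
    then show "w = 0" using kernel[of "?P w"] blockvec_bproj by metis
  qed
  then obtain w where w: "G w = s"
    using lin linear_injective_imp_surjective by (metis surjD)
  have "w = ?P w"
    using w G_block[of w] s by (auto simp: vec_eq_iff bproj_def blockvec_def split: if_splits)
  moreover have "?P (M *v ?P w) = s"
    using w G_block[of w] s by (auto simp: vec_eq_iff bproj_def blockvec_def split: if_splits)
  ultimately have sol: "blockvec blk i w \<and> ?P (M *v w) = s"
    by (metis blockvec_bproj)
  show ?thesis
  proof (rule ex1I)
    show "blockvec blk i w \<and> ?P (M *v w) = s" by (rule sol)
  next
    fix v assume v: "blockvec blk i v \<and> ?P (M *v v) = s"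
    have "?P (M *v (v - w)) = 0"
      using v sol by (simp add: matrix_vector_mult_diff_distrib bproj_diff)
    then show "v = w" using kernel[of "v - w"] v sol by (simp add: blockvec_diff)
  qed
qed

lemma inner_le_bdual_bnorm:
  assumes S: "block_symmetric blk i (B i)" and pd: "block_posdef blk i (B i)"
    and s: "blockvec blk i s" and t: "blockvec blk i t"
  shows "s \<bullet> t \<le> bdual blk B i s * bnorm B i t"
proof -
  define v where "v = (THE v. blockvec blk i v \<and> bproj blk i (B i *v v) = s)"
  have v: "blockvec blk i v" "bproj blk i (B i *v v) = s"
    unfolding v_def using theI'[OF block_solve_ex1[OF pd s]] by blast+
  have "bdual blk B i s = sqrt ((B i *v v) \<bullet> v)"
    using v inner_blockvec_bproj[OF v(1), of "B i *v v"]
    by (simp add: bdual_def v_def[symmetric] inner_commute)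
  moreover have "s \<bullet> t = (B i *v v) \<bullet> t"
    using v inner_blockvec_bproj[OF t, of "B i *v v"] by simp
  ultimately show ?thesis
    using block_quadratic_cauchy_schwarz[OF S pd v(1) t] by (simp add: bnorm_def)
qed

section \<open>Block descent lemma\<close>

lemma block_descent:
  fixes f :: "real^'N::finite \<Rightarrow> real"
  assumes S: "block_symmetric blk i (B i)" and pd: "block_posdef blk i (B i)"
    and grad: "\<forall>x. (f has_derivative (\<lambda>h. grad x \<bullet> h)) (at x)"
    and lip: "\<forall>x t. blockvec blk i t \<longrightarrow>
                bdual blk B i (bproj blk i (grad (x + t)) - bproj blk i (grad x)) \<le> Li * bnorm B i t"
    and t: "blockvec blk i t"
  shows "f (x + t) \<le> f x + bproj blk i (grad x) \<bullet> t + Li / 2 * (bnorm B i t)\<^sup>2"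
proof -
  define \<beta> where "\<beta> = bnorm B i t"
  have "\<beta> \<ge> 0" using block_posdef_nonneg[OF pd t] by (simp add: \<beta>_def bnorm_def)
  \<comment> \<open>The gap between f and its block quadratic model is nonincreasing along the segment.\<close>
  define \<phi> where "\<phi> = (\<lambda>\<tau>::real. f (x + \<tau> *\<^sub>R t) - \<tau> * (grad x \<bullet> t) - Li / 2 * \<tau>\<^sup>2 * \<beta>\<^sup>2)"
  have "\<phi> 1 \<le> \<phi> 0"
  proof (rule DERIV_nonpos_imp_nonincreasing[of 0 1 \<phi>])
    fix \<tau> :: real assume \<tau>: "0 \<le> \<tau>" "\<tau> \<le> 1"
    have "((\<lambda>\<tau>. f (x + \<tau> *\<^sub>R t)) has_derivative (\<lambda>h. grad (x + \<tau> *\<^sub>R t) \<bullet> (h *\<^sub>R t))) (at \<tau>)"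
      by (rule has_derivative_compose[of "\<lambda>\<tau>. x + \<tau> *\<^sub>R t" _ _ _ f, unfolded o_def])
        (auto intro!: derivative_eq_intros grad[rule_format])
    then have "((\<lambda>\<tau>. f (x + \<tau> *\<^sub>R t)) has_field_derivative (grad (x + \<tau> *\<^sub>R t) \<bullet> t)) (at \<tau>)"
      by (rule has_derivative_imp_has_field_derivative) (simp add: inner_scaleR_right)
    then have D: "(\<phi> has_field_derivative
        (grad (x + \<tau> *\<^sub>R t) \<bullet> t - grad x \<bullet> t - Li * \<tau> * \<beta>\<^sup>2)) (at \<tau>)"
      unfolding \<phi>_def by (auto intro!: derivative_eq_intros)
    define s where "s = bproj blk i (grad (x + \<tau> *\<^sub>R t)) - bproj blk i (grad x)"
    have "grad (x + \<tau> *\<^sub>R t) \<bullet> t - grad x \<bullet> t = s \<bullet> t"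
      using inner_blockvec_bproj[OF t] by (simp add: s_def inner_diff_left)
    also have "\<dots> \<le> bdual blk B i s * \<beta>"
      unfolding \<beta>_def
      by (rule inner_le_bdual_bnorm[of blk i B, OF S pd _ t]) (simp add: s_def blockvec_diff blockvec_bproj)
    also have "\<dots> \<le> Li * bnorm B i (\<tau> *\<^sub>R t) * \<beta>"
      using lip blockvec_scaleR[OF t, of \<tau>] \<open>\<beta> \<ge> 0\<close>
      by (intro mult_right_mono) (auto simp: s_def)
    also have "\<dots> = Li * \<tau> * \<beta>\<^sup>2"
      using \<tau> by (simp add: bnorm_scaleR \<beta>_def power2_eq_square)
    finally show "\<exists>y. (\<phi> has_real_derivative y) (at \<tau>) \<and> y \<le> 0"
      using D by auto
  qed simp
  then show ?thesis using inner_blockvec_bproj[OF t, of "grad x"] by (simp add: \<phi>_def \<beta>_def)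
qed

section \<open>Existence and uniqueness of the block minimiser\<close>

lemma compact_closed_sublevels_attains_min:
  fixes h :: "'a::metric_space \<Rightarrow> ereal"
  assumes K: "compact K" "K \<noteq> {}" and closed: "\<And>r. closed {u\<in>K. h u \<le> ereal r}"
  shows "\<exists>u\<in>K. \<forall>v\<in>K. h u \<le> h v"
proof -
  define m where "m = (INF v\<in>K. h v)"
  define C where "C = (\<lambda>r. {u\<in>K. h u \<le> ereal r})"
  have C_ne: "C r \<noteq> {}" if "m < ereal r" for r
    using that unfolding m_def INF_less_iff C_def by (auto intro: less_imp_le)
  have C_mono: "C r \<subseteq> C r'" if "r \<le> r'" for r r'
    using that by (auto simp: C_def order_trans)
  have "K \<inter> \<Inter>(C ` {r. m < ereal r}) \<noteq> {}"
  proof (rule compact_imp_fip[OF K(1)])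
    show "closed T" if "T \<in> C ` {r. m < ereal r}" for T
      using that closed by (auto simp: C_def)
  next
    fix F' assume "finite F'" "F' \<subseteq> C ` {r. m < ereal r}"
    then obtain R where R: "R \<subseteq> {r. m < ereal r}" "finite R" "F' = C ` R"
      by (meson finite_subset_image)
    show "K \<inter> \<Inter>F' \<noteq> {}"
    proof (cases "R = {}")
      case True
      then show ?thesis using R K by auto
    next
      case False
      then have ne: "C (Min R) \<noteq> {}"
        using C_ne R(1) Min_in[OF R(2) False] by auto
      have "\<forall>r\<in>R. C (Min R) \<subseteq> C r"
        using C_mono[OF Min_le[OF R(2)]] by simp
      moreover have "C (Min R) \<subseteq> K" by (auto simp: C_def)
      ultimately have "C (Min R) \<subseteq> K \<inter> \<Inter>F'"
        by (simp add: R(3) le_INF_iff)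
      then show ?thesis using ne by blast
    qed
  qed
  then obtain u where u: "u \<in> K" and "\<And>r. m < ereal r \<Longrightarrow> u \<in> C r"
    by blast
  then have hu: "\<And>r. m < ereal r \<Longrightarrow> h u \<le> ereal r"
    by (simp add: C_def)
  have "h u \<le> m"
  proof (rule ccontr)
    assume "\<not> h u \<le> m"
    then have "m < h u" by simp
    then obtain r where "m < ereal r" "ereal r < h u"
      using ereal_dense2 by blast
    then show False using hu[of r] by simp
  qed
  then show ?thesis using u unfolding m_def by (meson INF_lower order_trans)
qed

lemma closed_sublevel_plus_continuous:
  fixes \<phi> :: "'a::euclidean_space \<Rightarrow> ereal" and g :: "'a \<Rightarrow> real"
  assumes epi: "closed {(u, r). u \<in> S \<and> \<phi> u \<le> ereal r}" and K: "closed K" "K \<subseteq> S"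
    and g: "continuous_on UNIV g"
  shows "closed {u\<in>K. ereal (g u) + \<phi> u \<le> ereal r}"
proof -
  have shift: "ereal a + y \<le> ereal r \<longleftrightarrow> y \<le> ereal (r - a)" for a y
    by (cases y) auto
  have "{u\<in>K. ereal (g u) + \<phi> u \<le> ereal r} =
      K \<inter> (\<lambda>u. (u, r - g u)) -` {(u, r). u \<in> S \<and> \<phi> u \<le> ereal r}"
    using K(2) by (auto simp: shift)
  moreover have "closed ((\<lambda>u. (u, r - g u)) -` {(u, r). u \<in> S \<and> \<phi> u \<le> ereal r})"
    using epi g by (intro continuous_closed_vimage) (auto intro!: continuous_intros
        simp: continuous_on_eq_continuous_at)
  ultimately show ?thesis using K(1) by auto
qed

lemma convex_ereal_extrapolation_bound:
  fixes \<phi> :: "'a::real_normed_vector \<Rightarrow> ereal"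
  assumes S: "convex S" and t: "t \<in> S" "\<phi> t \<noteq> -\<infinity>" "norm (t - t0) > 1"
    and t0: "t0 \<in> S" "\<phi> t0 = ereal p0" and "c \<le> p0"
    and convex: "\<forall>u\<in>S. \<forall>v\<in>S. \<forall>a. 0 \<le> a \<and> a \<le> 1 \<longrightarrow>
                   \<phi> (a *\<^sub>R u + (1 - a) *\<^sub>R v) \<le> ereal a * \<phi> u + ereal (1 - a) * \<phi> v"
    and sphere: "\<forall>p\<in>S. norm (p - t0) = 1 \<longrightarrow> ereal c \<le> \<phi> p"
  shows "ereal (c - (p0 - c) * norm (t - t0)) \<le> \<phi> t"
proof -
  define d where "d = norm (t - t0)"
  have "d > 1" using t(3) by (simp add: d_def)
  define a where "a = 1 / d"
  have a: "0 \<le> a" "a \<le> 1" using \<open>d > 1\<close> by (auto simp: a_def)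
  \<comment> \<open>p is where the segment from t0 to t crosses the unit sphere around t0.\<close>
  define p where "p = a *\<^sub>R t + (1 - a) *\<^sub>R t0"
  have "p \<in> S" unfolding p_def using S t(1) t0(1) a by (simp add: convex_def)
  moreover have "p - t0 = a *\<^sub>R (t - t0)" by (simp add: p_def algebra_simps)
  then have "norm (p - t0) = 1" using t(3) by (auto simp: a_def d_def)
  ultimately have "ereal c \<le> \<phi> p" using sphere by blast
  also have "\<phi> p \<le> ereal a * \<phi> t + ereal (1 - a) * ereal p0"
    using convex t t0 a unfolding p_def by metis
  finally have bound: "ereal c \<le> ereal a * \<phi> t + ereal (1 - a) * ereal p0" .
  show ?thesis
  proof (cases "\<phi> t")
    case (real y)
    then have "d * c \<le> d * (a * y + (1 - a) * p0)" using bound \<open>d > 1\<close> by simp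
    also have "\<dots> = y + (d - 1) * p0" using \<open>d > 1\<close> by (simp add: a_def algebra_simps)
    finally show ?thesis using real \<open>c \<le> p0\<close> by (simp add: d_def algebra_simps)
  qed (use t(2) in auto)
qed

lemma convex_closed_epigraph_lower_bound:
  fixes \<phi> :: "'a::euclidean_space \<Rightarrow> ereal"
  assumes S: "closed S" "convex S"
    and not_minf: "\<forall>t\<in>S. \<phi> t \<noteq> -\<infinity>" and t0: "t0 \<in> S" "\<phi> t0 \<noteq> \<infinity>"
    and convex: "\<forall>u\<in>S. \<forall>v\<in>S. \<forall>a. 0 \<le> a \<and> a \<le> 1 \<longrightarrow>
                   \<phi> (a *\<^sub>R u + (1 - a) *\<^sub>R v) \<le> ereal a * \<phi> u + ereal (1 - a) * \<phi> v"
    and epi: "closed {(u, r). u \<in> S \<and> \<phi> u \<le> ereal r}"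
  shows "\<exists>c K. K \<ge> 0 \<and> (\<forall>t\<in>S. ereal (c - K * norm (t - t0)) \<le> \<phi> t)"
proof -
  define U where "U = S \<inter> cball t0 1"
  have "compact U" unfolding U_def by (rule closed_Int_compact[OF S(1) compact_cball])
  moreover have "U \<noteq> {}" using t0 by (auto simp: U_def)
  moreover have "closed {u\<in>U. ereal 0 + \<phi> u \<le> ereal r}" for r
    using closed_sublevel_plus_continuous[OF epi, of U "\<lambda>_. 0"] \<open>compact U\<close>
    by (auto simp: U_def compact_imp_closed)
  ultimately obtain u where u: "u \<in> U" "\<forall>v\<in>U. \<phi> u \<le> \<phi> v"
    using compact_closed_sublevels_attains_min[of U \<phi>] by auto
  have "\<phi> u \<le> \<phi> t0" using u t0 by (auto simp: U_def)
  then obtain c p0 where c: "\<phi> u = ereal c" and p0: "\<phi> t0 = ereal p0" and "c \<le> p0"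
    using not_minf u(1) t0 by (cases "\<phi> u"; cases "\<phi> t0") (auto simp: U_def)
  have near: "ereal c \<le> \<phi> p" if "p \<in> S" "norm (p - t0) \<le> 1" for p
    using that u c by (auto simp: U_def dist_norm norm_minus_commute)
  have "ereal (c - (p0 - c) * norm (t - t0)) \<le> \<phi> t" if t: "t \<in> S" for t
  proof (cases "norm (t - t0) \<le> 1")
    case True
    moreover have "c - (p0 - c) * norm (t - t0) \<le> c" using \<open>c \<le> p0\<close> by simp
    ultimately show ?thesis using near[OF t] by (meson ereal_less_eq(3) order_trans)
  next
    case False
    then show ?thesis
      using convex_ereal_extrapolation_bound[OF S(2) t _ _ t0(1) p0 \<open>c \<le> p0\<close> convex] near not_minf t
      by simp
  qed
  then show ?thesis using \<open>c \<le> p0\<close> by (intro exI[of _ c] exI[of _ "p0 - c"]) auto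
qed

lemma closed_sublevels_coercive_attains_min:
  fixes h :: "'a::euclidean_space \<Rightarrow> ereal"
  assumes S: "closed S" "t0 \<in> S"
    and closed: "\<And>K r. closed K \<Longrightarrow> K \<subseteq> S \<Longrightarrow> closed {u\<in>K. h u \<le> ereal r}"
    and far: "\<And>s. s \<in> S \<Longrightarrow> norm s > R \<Longrightarrow> h t0 < h s"
  shows "\<exists>t\<in>S. \<forall>s\<in>S. h t \<le> h s"
proof -
  define U where "U = S \<inter> cball 0 (max R (norm t0))"
  have "compact U" unfolding U_def by (rule closed_Int_compact[OF S(1) compact_cball])
  moreover have "t0 \<in> U" using S(2) by (auto simp: U_def)
  moreover have "closed {u\<in>U. h u \<le> ereal r}" for r
    using closed[of U] \<open>compact U\<close> by (auto simp: U_def compact_imp_closed)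
  ultimately obtain u where u: "u \<in> U" "\<forall>v\<in>U. h u \<le> h v"
    using compact_closed_sublevels_attains_min[of U h] by blast
  have "h u \<le> h s" if "s \<in> S" for s
  proof (cases "norm s \<le> max R (norm t0)")
    case True
    then show ?thesis using that u by (auto simp: U_def)
  next
    case False
    then have "h t0 < h s" using far[OF that] by simp
    moreover have "h u \<le> h t0" using u(2) \<open>t0 \<in> U\<close> by blast
    ultimately show ?thesis by simp
  qed
  then show ?thesis using u(1) by (auto simp: U_def)
qed

lemma quadratic_eventually_gt:
  fixes \<alpha> \<gamma> \<delta> M :: real
  assumes "\<alpha> > 0"
  shows "\<exists>R. \<forall>r>R. M < \<alpha> * r\<^sup>2 - \<gamma> * r + \<delta>"
proof (intro exI allI impI)
  fix r assume "r > max 1 ((\<bar>\<gamma>\<bar> + \<bar>M - \<delta>\<bar> + 1) / \<alpha>)"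
  then have "r \<ge> 1" and "\<alpha> * r - \<gamma> \<ge> \<bar>M - \<delta>\<bar> + 1"
    using assms by (auto simp: field_simps)
  then have "r * (\<alpha> * r - \<gamma>) \<ge> 1 * (\<alpha> * r - \<gamma>)"
    by (intro mult_right_mono) auto
  then show "M < \<alpha> * r\<^sup>2 - \<gamma> * r + \<delta>"
    using \<open>\<alpha> * r - \<gamma> \<ge> _\<close> by (simp add: power2_eq_square algebra_simps)
qed

lemma convex_closed_epigraph_plus_coercive_attains_min:
  fixes \<phi> :: "'a::euclidean_space \<Rightarrow> ereal" and q :: "'a \<Rightarrow> real"
  assumes S: "closed S" "convex S"
    and not_minf: "\<forall>t\<in>S. \<phi> t \<noteq> -\<infinity>" and t0: "t0 \<in> S" "\<phi> t0 \<noteq> \<infinity>"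
    and convex: "\<forall>u\<in>S. \<forall>v\<in>S. \<forall>a. 0 \<le> a \<and> a \<le> 1 \<longrightarrow>
                   \<phi> (a *\<^sub>R u + (1 - a) *\<^sub>R v) \<le> ereal a * \<phi> u + ereal (1 - a) * \<phi> v"
    and epi: "closed {(u, r). u \<in> S \<and> \<phi> u \<le> ereal r}"
    and q: "continuous_on UNIV q"
    and growth: "\<alpha> > 0" "\<forall>t\<in>S. \<alpha> * (norm t)\<^sup>2 - \<beta> * norm t \<le> q t"
  shows "\<exists>t\<in>S. \<forall>s\<in>S. ereal (q t) + \<phi> t \<le> ereal (q s) + \<phi> s"
proof -
  obtain c K where "K \<ge> 0" and lower: "\<forall>t\<in>S. ereal (c - K * norm (t - t0)) \<le> \<phi> t"
    using convex_closed_epigraph_lower_bound[OF S not_minf t0 convex epi] by blast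
  obtain p0 where p0: "\<phi> t0 = ereal p0" using t0 not_minf by (cases "\<phi> t0") auto
  define \<gamma> where "\<gamma> = \<bar>\<beta>\<bar> + K"
  define \<delta> where "\<delta> = c - K * norm t0"
  have quadratic_lower: "ereal (\<alpha> * (norm t)\<^sup>2 - \<gamma> * norm t + \<delta>) \<le> ereal (q t) + \<phi> t"
    if t: "t \<in> S" for t
  proof -
    have "K * norm (t - t0) \<le> K * (norm t + norm t0)"
      using \<open>K \<ge> 0\<close> by (intro mult_left_mono norm_triangle_ineq4)
    moreover have "\<beta> * norm t \<le> \<bar>\<beta>\<bar> * norm t" by (simp add: mult_right_mono)
    ultimately have "\<alpha> * (norm t)\<^sup>2 - \<gamma> * norm t + \<delta> \<le> q t + (c - K * norm (t - t0))"
      using growth(2) t by (simp add: \<gamma>_def \<delta>_def algebra_simps) (smt (verit))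
    then have "ereal (\<alpha> * (norm t)\<^sup>2 - \<gamma> * norm t + \<delta>) \<le> ereal (q t) + ereal (c - K * norm (t - t0))"
      by simp
    also have "\<dots> \<le> ereal (q t) + \<phi> t" using lower t by (intro add_left_mono) auto
    finally show ?thesis .
  qed
  obtain R where R: "\<forall>r>R. q t0 + p0 < \<alpha> * r\<^sup>2 - \<gamma> * r + \<delta>"
    using quadratic_eventually_gt[OF growth(1)] by blast
  show ?thesis
  proof (rule closed_sublevels_coercive_attains_min[OF S(1) t0(1)])
    show "closed {u\<in>K. ereal (q u) + \<phi> u \<le> ereal r}" if "closed K" "K \<subseteq> S" for K r
      using closed_sublevel_plus_continuous[OF epi that q] .
    show "ereal (q t0) + \<phi> t0 < ereal (q s) + \<phi> s" if "s \<in> S" "norm s > R" for s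
    proof -
      have "ereal (q t0) + \<phi> t0 < ereal (\<alpha> * (norm s)\<^sup>2 - \<gamma> * norm s + \<delta>)"
        using R that(2) p0 by simp
      also have "\<dots> \<le> ereal (q s) + \<phi> s" by (rule quadratic_lower[OF that(1)])
      finally show ?thesis .
    qed
  qed
qed

lemma convex_strict_argmin_unique:
  fixes \<phi> :: "'a::real_vector \<Rightarrow> ereal" and q :: "'a \<Rightarrow> real"
  assumes S: "convex S" and not_minf: "\<forall>t\<in>S. \<phi> t \<noteq> -\<infinity>" and t0: "t0 \<in> S" "\<phi> t0 \<noteq> \<infinity>"
    and convex: "\<forall>u\<in>S. \<forall>v\<in>S. \<forall>a. 0 \<le> a \<and> a \<le> 1 \<longrightarrow>
                   \<phi> (a *\<^sub>R u + (1 - a) *\<^sub>R v) \<le> ereal a * \<phi> u + ereal (1 - a) * \<phi> v"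
    and strict: "\<And>u v. u \<in> S \<Longrightarrow> v \<in> S \<Longrightarrow> u \<noteq> v \<Longrightarrow>
                   q ((1/2) *\<^sub>R u + (1/2) *\<^sub>R v) < (q u + q v) / 2"
    and u: "u \<in> S" "\<forall>s\<in>S. ereal (q u) + \<phi> u \<le> ereal (q s) + \<phi> s"
    and v: "v \<in> S" "\<forall>s\<in>S. ereal (q v) + \<phi> v \<le> ereal (q s) + \<phi> s"
  shows "u = v"
proof (rule ccontr)
  assume "u \<noteq> v"
  have finite: "\<phi> t \<noteq> \<infinity>" if "t \<in> S" "ereal (q t) + \<phi> t \<le> ereal (q t0) + \<phi> t0" for t
    using that t0(2) by auto
  obtain pu pv where pu: "\<phi> u = ereal pu" and pv: "\<phi> v = ereal pv"
    using finite[of u] finite[of v] u v t0(1) not_minf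
    by (cases "\<phi> u"; cases "\<phi> v") auto
  have same_value: "q u + pu = q v + pv"
    using u v pu pv by (metis antisym ereal_less_eq(3) plus_ereal.simps(1))
  define m where "m = (1/2::real) *\<^sub>R u + (1/2) *\<^sub>R v"
  have "m \<in> S" using S u v by (simp add: m_def convex_def)
  have "\<phi> m \<le> ereal (1/2) * \<phi> u + ereal (1 - 1/2) * \<phi> v"
    using convex[rule_format, OF u(1) v(1), of "1/2"] unfolding m_def by simp
  also have "\<dots> = ereal ((pu + pv) / 2)" using pu pv by (simp add: add_divide_distrib)
  finally have "\<phi> m \<le> ereal ((pu + pv) / 2)" .
  then have "ereal (q m) + \<phi> m \<le> ereal (q m + (pu + pv) / 2)" by (cases "\<phi> m") auto
  also have "q m + (pu + pv) / 2 < q u + pu"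
    using strict[OF u(1) v(1) \<open>u \<noteq> v\<close>] same_value by (simp add: m_def field_simps)
  finally show False using u(2) \<open>m \<in> S\<close> pu by fastforce
qed

lemma convex_ereal_translate:
  fixes \<phi> :: "'a::real_vector \<Rightarrow> ereal"
  assumes shift: "\<And>t. c + t \<in> S \<longleftrightarrow> t \<in> S"
    and convex: "\<forall>u\<in>S. \<forall>v\<in>S. \<forall>a. 0 \<le> a \<and> a \<le> 1 \<longrightarrow>
                   \<phi> (a *\<^sub>R u + (1 - a) *\<^sub>R v) \<le> ereal a * \<phi> u + ereal (1 - a) * \<phi> v"
  shows "\<forall>u\<in>S. \<forall>v\<in>S. \<forall>a. 0 \<le> a \<and> a \<le> 1 \<longrightarrow>
           \<phi> (c + (a *\<^sub>R u + (1 - a) *\<^sub>R v)) \<le> ereal a * \<phi> (c + u) + ereal (1 - a) * \<phi> (c + v)"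
proof (intro ballI allI impI)
  fix u v and a :: real assume "u \<in> S" "v \<in> S" "0 \<le> a \<and> a \<le> 1"
  moreover have "c + (a *\<^sub>R u + (1 - a) *\<^sub>R v) = a *\<^sub>R (c + u) + (1 - a) *\<^sub>R (c + v)"
    by (simp add: algebra_simps)
  ultimately show
      "\<phi> (c + (a *\<^sub>R u + (1 - a) *\<^sub>R v)) \<le> ereal a * \<phi> (c + u) + ereal (1 - a) * \<phi> (c + v)"
    using convex shift by simp
qed

lemma closed_epigraph_translate:
  fixes \<phi> :: "'a::real_normed_vector \<Rightarrow> ereal"
  assumes shift: "\<And>t. c + t \<in> S \<longleftrightarrow> t \<in> S" and epi: "closed {(u, r). u \<in> S \<and> \<phi> u \<le> ereal r}"
  shows "closed {(u, r). u \<in> S \<and> \<phi> (c + u) \<le> ereal r}"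
proof -
  have eq: "{(u, r). u \<in> S \<and> \<phi> (c + u) \<le> ereal r} =
      (\<lambda>p. (c + fst p, snd p)) -` {(u, r). u \<in> S \<and> \<phi> u \<le> ereal r}"
    by (auto simp: shift)
  have "continuous_on UNIV (\<lambda>p::'a \<times> real. (c + fst p, snd p))"
    by (intro continuous_intros)
  then show ?thesis unfolding eq using epi
    by (intro continuous_closed_vimage) (auto simp: continuous_on_eq_continuous_at)
qed

lemma block_model_coercive:
  assumes pd: "block_posdef blk i (B i)" and L: "L i > 0"
  shows "\<exists>\<alpha>>0. \<forall>t. blockvec blk i t \<longrightarrow>
           \<alpha> * (norm t)\<^sup>2 - norm g * norm t \<le> g \<bullet> t + L i / 2 * (bnorm B i t)\<^sup>2"
proof -
  obtain \<mu> where "\<mu> > 0" and \<mu>: "\<forall>t. blockvec blk i t \<longrightarrow> \<mu> * (norm t)\<^sup>2 \<le> (B i *v t) \<bullet> t"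
    using block_posdef_coercive[OF pd] by blast
  have "(L i / 2 * \<mu>) * (norm t)\<^sup>2 - norm g * norm t \<le> g \<bullet> t + L i / 2 * (bnorm B i t)\<^sup>2"
    if t: "blockvec blk i t" for t
  proof -
    have "L i / 2 * (\<mu> * (norm t)\<^sup>2) \<le> L i / 2 * (bnorm B i t)\<^sup>2"
      using \<mu> L t bnorm_power2[of blk i B, OF pd t] by (intro mult_left_mono) auto
    moreover have "- (norm g * norm t) \<le> g \<bullet> t" using norm_cauchy_schwarz[of "-g" t] by simp
    ultimately show ?thesis by (simp add: algebra_simps)
  qed
  moreover have "L i / 2 * \<mu> > 0" using L \<open>\<mu> > 0\<close> by simp
  ultimately show ?thesis by blast
qed

lemma block_model_midpoint_less:
  fixes g :: "real^'N::finite"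
  assumes S: "block_symmetric blk i (B i)" and pd: "block_posdef blk i (B i)" and L: "L i > 0"
    and u: "blockvec blk i u" and v: "blockvec blk i v" and "u \<noteq> v"
  defines "q \<equiv> \<lambda>t. g \<bullet> t + L i / 2 * (bnorm B i t)\<^sup>2"
  shows "q ((1/2) *\<^sub>R u + (1/2) *\<^sub>R v) < (q u + q v) / 2"
proof -
  let ?m = "(1/2::real) *\<^sub>R u + (1/2) *\<^sub>R v"
  have "blockvec blk i ?m" using u v by (intro blockvec_add blockvec_scaleR)
  then have "(bnorm B i ?m)\<^sup>2 < ((bnorm B i u)\<^sup>2 + (bnorm B i v)\<^sup>2) / 2"
    using block_quadratic_midpoint_less[OF S pd u v \<open>u \<noteq> v\<close>] u v
    by (simp add: bnorm_power2[of blk i B, OF pd])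
  then have "L i / 2 * (bnorm B i ?m)\<^sup>2 < L i / 2 * (((bnorm B i u)\<^sup>2 + (bnorm B i v)\<^sup>2) / 2)"
    using L by simp
  moreover have "g \<bullet> ?m = (g \<bullet> u + g \<bullet> v) / 2" by (simp add: inner_add_right)
  ultimately show ?thesis by (simp add: q_def algebra_simps add_divide_distrib)
qed

lemma Vblk_ex1_argmin:
  fixes B :: "nat \<Rightarrow> real^'N::finite^'N"
  assumes S: "block_symmetric blk i (B i)" and pd: "block_posdef blk i (B i)" and L: "L i > 0"
    and proper: "(\<forall>t. blockvec blk i t \<longrightarrow> Psi i t \<noteq> -\<infinity>) \<and> (\<exists>t. blockvec blk i t \<and> Psi i t \<noteq> \<infinity>)"
    and convex: "\<forall>u v a. blockvec blk i u \<and> blockvec blk i v \<and> 0 \<le> a \<and> a \<le> 1 \<longrightarrow>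
                   Psi i (a *\<^sub>R u + (1 - a) *\<^sub>R v) \<le> ereal a * Psi i u + ereal (1 - a) * Psi i v"
    and closed: "closed {(u, r::real). blockvec blk i u \<and> Psi i u \<le> ereal r}"
  shows "\<exists>!t. blockvec blk i t \<and>
           (\<forall>s. blockvec blk i s \<longrightarrow> Vblk blk B L grad Psi i x t \<le> Vblk blk B L grad Psi i x s)"
proof -
  define T where "T = {t. blockvec blk i t}"
  define c where "c = bproj blk i x"
  define \<phi> where "\<phi> t = Psi i (c + t)" for t
  define q where "q t = bproj blk i (grad x) \<bullet> t + L i / 2 * (bnorm B i t)\<^sup>2" for t
  have V: "Vblk blk B L grad Psi i x t = ereal (q t) + \<phi> t" for t
    by (simp add: Vblk_def q_def \<phi>_def c_def)
  have "c \<in> T" by (simp add: T_def c_def blockvec_bproj)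
  then have shift: "c + t \<in> T \<longleftrightarrow> t \<in> T" for t
    using blockvec_add[of blk i c t] blockvec_diff[of blk i "c + t" c] by (auto simp: T_def)
  obtain t' where "t' \<in> T" "Psi i t' \<noteq> \<infinity>" using proper by (auto simp: T_def)
  then have t0: "t' - c \<in> T" "\<phi> (t' - c) \<noteq> \<infinity>"
    using \<open>c \<in> T\<close> by (auto simp: T_def \<phi>_def blockvec_diff)
  have not_minf: "\<forall>t\<in>T. \<phi> t \<noteq> -\<infinity>"
    using proper shift by (simp add: T_def \<phi>_def)
  have \<phi>_convex: "\<forall>u\<in>T. \<forall>v\<in>T. \<forall>a. 0 \<le> a \<and> a \<le> 1 \<longrightarrow>
      \<phi> (a *\<^sub>R u + (1 - a) *\<^sub>R v) \<le> ereal a * \<phi> u + ereal (1 - a) * \<phi> v"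
    using convex_ereal_translate[of c T "Psi i", OF shift] convex by (simp add: T_def \<phi>_def)
  have epi: "closed {(u, r). u \<in> T \<and> \<phi> u \<le> ereal r}"
    using closed_epigraph_translate[of c T "Psi i", OF shift] closed by (simp add: T_def \<phi>_def)
  have q_cont: "continuous_on UNIV q" unfolding q_def bnorm_def by (intro continuous_intros)
  obtain \<alpha> where "\<alpha> > 0"
    and growth: "\<forall>t\<in>T. \<alpha> * (norm t)\<^sup>2 - norm (bproj blk i (grad x)) * norm t \<le> q t"
    using block_model_coercive[of blk i B L, OF pd L] by (auto simp: T_def q_def)
  obtain tm where tm: "tm \<in> T" "\<forall>s\<in>T. ereal (q tm) + \<phi> tm \<le> ereal (q s) + \<phi> s"
    using convex_closed_epigraph_plus_coercive_attains_min[OF closed_blockvec[of blk i, folded T_def]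
        convex_blockvec[of blk i, folded T_def] not_minf t0 \<phi>_convex epi q_cont \<open>\<alpha> > 0\<close> growth]
    by blast
  have q_strict: "q ((1/2) *\<^sub>R u + (1/2) *\<^sub>R v) < (q u + q v) / 2"
    if "u \<in> T" "v \<in> T" "u \<noteq> v" for u v
    using block_model_midpoint_less[of blk i B L, OF S pd L _ _ \<open>u \<noteq> v\<close>] that
    by (simp add: T_def q_def)
  have unique: "t = tm" if "t \<in> T" "\<forall>s\<in>T. ereal (q t) + \<phi> t \<le> ereal (q s) + \<phi> s" for t
    by (rule convex_strict_argmin_unique[OF convex_blockvec[of blk i, folded T_def] not_minf t0
          \<phi>_convex q_strict that tm])
  show ?thesis
  proof (rule ex1I[where a = tm])
    show "blockvec blk i tm \<and>
        (\<forall>s. blockvec blk i s \<longrightarrow> Vblk blk B L grad Psi i x tm \<le> Vblk blk B L grad Psi i x s)"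
      using tm by (simp add: V T_def)
  next
    fix t assume "blockvec blk i t \<and>
        (\<forall>s. blockvec blk i s \<longrightarrow> Vblk blk B L grad Psi i x t \<le> Vblk blk B L grad Psi i x s)"
    then show "t = tm" using unique[of t] by (simp add: V T_def)
  qed
qed

lemma blockvec_Tblk:
  fixes B :: "nat \<Rightarrow> real^'N::finite^'N"
  assumes "block_symmetric blk i (B i)" and "block_posdef blk i (B i)" and "L i > 0"
    and "(\<forall>t. blockvec blk i t \<longrightarrow> Psi i t \<noteq> -\<infinity>) \<and> (\<exists>t. blockvec blk i t \<and> Psi i t \<noteq> \<infinity>)"
    and "\<forall>u v a. blockvec blk i u \<and> blockvec blk i v \<and> 0 \<le> a \<and> a \<le> 1 \<longrightarrow>
           Psi i (a *\<^sub>R u + (1 - a) *\<^sub>R v) \<le> ereal a * Psi i u + ereal (1 - a) * Psi i v"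
    and "closed {(u, r::real). blockvec blk i u \<and> Psi i u \<le> ereal r}"
  shows "blockvec blk i (Tblk blk B L grad Psi i x)"
  using theI'[OF Vblk_ex1_argmin[where blk = blk and i = i and B = B and L = L and Psi = Psi, OF assms]]
  unfolding Tblk_def by blast

section \<open>Averaging over the blocks\<close>

lemma sum_leave_one_out_ereal:
  fixes a :: "nat \<Rightarrow> ereal"
  shows "(\<Sum>i<n. \<Sum>j\<in>{..<n}-{i}. a j) = ereal (real n - 1) * sum a {..<n}"
proof (cases "n = 0")
  case False
  have "(\<Sum>i<n. \<Sum>j\<in>{..<n}-{i}. a j) = (\<Sum>j<n. \<Sum>i\<in>{..<n}-{j}. a j)"
    using sum.swap_restrict[of "{..<n}" "{..<n}" "\<lambda>i j. a j" "\<lambda>i j. j \<noteq> i"]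
    by (simp add: set_diff_eq Collect_conj_eq lessThan_def eq_commute)
  also have "\<dots> = (\<Sum>j<n. a j * ereal (real n - 1))"
    using False by (intro sum.cong refl) (simp add: sum_constant_ereal of_nat_diff)
  also have "\<dots> = ereal (real n - 1) * sum a {..<n}"
    using False by (simp add: sum_distrib_right_ereal mult.commute)
  finally show ?thesis .
qed simp

text \<open>No finiteness of a and b is needed: with \<infinity> + -\<infinity> = \<infinity>, addition and multiplication by a
  finite nonnegative factor still distribute, so the computation below is valid in ereal as is.\<close>

lemma average_block_update_le:
  fixes a b :: "nat \<Rightarrow> ereal" and y d :: "nat \<Rightarrow> real"
  assumes n: "n > 0" and y: "\<forall>i<n. y i \<le> z + d i"
  shows "ereal (1 / real n) * (\<Sum>i<n. ereal (y i) + (b i + (\<Sum>j\<in>{..<n}-{i}. a j)) - ereal s)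
      \<le> ereal (1 / real n) * (ereal (z + sum d {..<n}) + sum b {..<n} - ereal s)
        + ereal ((real n - 1) / real n) * (ereal z + sum a {..<n} - ereal s)"
proof -
  let ?A = "\<lambda>i. \<Sum>j\<in>{..<n}-{i}. a j"
  have shift: "ereal u + X - ereal s = ereal (u - s) + X" for u and X :: ereal
    by (cases X) auto
  have "(\<Sum>i<n. ereal (y i) + (b i + ?A i) - ereal s) \<le> (\<Sum>i<n. ereal (z + d i - s) + b i + ?A i)"
  proof (intro sum_mono)
    fix i assume "i \<in> {..<n}"
    have "ereal (y i) + (b i + ?A i) - ereal s = ereal (y i - s) + (b i + ?A i)"
      by (rule shift)
    also have "\<dots> \<le> ereal (z + d i - s) + (b i + ?A i)"
      using y \<open>i \<in> {..<n}\<close> by (intro add_right_mono) simp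
    finally show "ereal (y i) + (b i + ?A i) - ereal s \<le> ereal (z + d i - s) + b i + ?A i"
      by (simp add: add.assoc)
  qed
  also have "\<dots> = ereal (real n * z + sum d {..<n} - real n * s) + sum b {..<n}
                     + ereal (real n - 1) * sum a {..<n}"
    by (simp add: sum.distrib sum_leave_one_out_ereal sum_subtractf)
  also have "\<dots> = ereal (z + sum d {..<n} - s) + ereal ((real n - 1) * (z - s)) + sum b {..<n}
                    + ereal (real n - 1) * sum a {..<n}"
    by (simp add: algebra_simps)
  also have "\<dots> = ereal (z + sum d {..<n} - s) + sum b {..<n}
                    + (ereal ((real n - 1) * (z - s)) + ereal (real n - 1) * sum a {..<n})"
    by (simp only: ac_simps)
  also have "\<dots> = (ereal (z + sum d {..<n}) + sum b {..<n} - ereal s)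
                    + ereal (real n - 1) * (ereal z + sum a {..<n} - ereal s)"
    using n by (simp add: shift ereal_pos_distrib)
  finally have "ereal (1 / real n) * (\<Sum>i<n. ereal (y i) + (b i + ?A i) - ereal s)
      \<le> ereal (1 / real n) * ((ereal (z + sum d {..<n}) + sum b {..<n} - ereal s)
                    + ereal (real n - 1) * (ereal z + sum a {..<n} - ereal s))"
    using n by (intro ereal_mult_left_mono) auto
  also have "\<dots> = ereal (1 / real n) * (ereal (z + sum d {..<n}) + sum b {..<n} - ereal s)
        + ereal ((real n - 1) / real n) * (ereal z + sum a {..<n} - ereal s)"
    by (simp add: ereal_pos_distrib mult.assoc[symmetric])
  finally show ?thesis .
qed

lemma sum_ereal_not_MInf: "(\<And>j. j \<in> A \<Longrightarrow> a j \<noteq> -\<infinity>) \<Longrightarrow> sum a A \<noteq> (-\<infinity> :: ereal)"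
  by (induction A rule: infinite_finite_induct) auto

lemma Psi_sum_add_blockvec:
  assumes "blockvec blk i t" and "i < n"
  shows "Psi_sum n blk Psi (x + t) = Psi i (bproj blk i x + t) + (\<Sum>j\<in>{..<n}-{i}. Psi j (bproj blk j x))"
proof -
  have "(\<Sum>j\<in>{..<n}-{i}. Psi j (bproj blk j (x + t))) = (\<Sum>j\<in>{..<n}-{i}. Psi j (bproj blk j x))"
    using assms by (intro sum.cong refl) (simp add: bproj_add bproj_blockvec_other)
  moreover have "bproj blk i t = t" using assms(1) blockvec_iff_bproj_eq by blast
  ultimately show ?thesis
    using assms(2) unfolding Psi_sum_def by (simp add: sum.remove[of _ i] bproj_add)
qed

lemma Psi_sum_sum_blockvecs:
  assumes "\<forall>l<n. blockvec blk l (t l)"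
  shows "Psi_sum n blk Psi (x + (\<Sum>l<n. t l)) = (\<Sum>j<n. Psi j (bproj blk j x + t j))"
  unfolding Psi_sum_def using assms by (intro sum.cong refl) (simp add: bproj_add bproj_sum_blockvecs)

lemma Hfun_sum_blockvecs:
  assumes t: "\<forall>l<n. blockvec blk l (t l)"
  shows "Hfun n blk B L f grad Psi x (\<Sum>l<n. t l) =
    ereal (f x + (\<Sum>j<n. bproj blk j (grad x) \<bullet> t j + L j / 2 * (bnorm B j (t j))\<^sup>2))
      + (\<Sum>j<n. Psi j (bproj blk j x + t j))"
proof -
  have "grad x \<bullet> (\<Sum>l<n. t l) = (\<Sum>j<n. bproj blk j (grad x) \<bullet> t j)"
    unfolding inner_sum_right using t by (intro sum.cong refl) (simp add: inner_blockvec_bproj[symmetric])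
  moreover have "normL_sq n blk B L (\<Sum>l<n. t l) = (\<Sum>j<n. L j * (bnorm B j (t j))\<^sup>2)"
    unfolding normL_sq_def using t by (intro sum.cong refl) (simp add: bproj_sum_blockvecs)
  ultimately show ?thesis
    using Psi_sum_sum_blockvecs[OF t]
    by (simp add: Hfun_def sum.distrib sum_distrib_left add.assoc)
qed

lemma ucdc_update_Suc:
  "ucdc blk B L grad Psi x0 (idx(k := i)) (Suc k)
     = ucdc blk B L grad Psi x0 idx k + Tblk blk B L grad Psi i (ucdc blk B L grad Psi x0 idx k)"
proof -
  have "ucdc blk B L grad Psi x0 (idx(k := i)) m = ucdc blk B L grad Psi x0 idx m" if "m \<le> k" for m
    using that by (induction m) auto
  then show ?thesis by simp
qed

locale block_composite =
  fixes n :: nat and blk :: "'N::finite \<Rightarrow> nat" and B :: "nat \<Rightarrow> real^'N^'N"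
    and L :: "nat \<Rightarrow> real" and f :: "real^'N \<Rightarrow> real" and grad :: "real^'N \<Rightarrow> real^'N"
    and Psi :: "nat \<Rightarrow> real^'N \<Rightarrow> ereal"
  assumes n_pos: "n > 0"
    and B_sym: "\<And>i. i < n \<Longrightarrow> block_symmetric blk i (B i)"
    and B_pd: "\<And>i. i < n \<Longrightarrow> block_posdef blk i (B i)"
    and L_pos: "\<And>i. i < n \<Longrightarrow> L i > 0"
    and f_grad: "\<forall>x. (f has_derivative (\<lambda>h. grad x \<bullet> h)) (at x)"
    and f_lip: "\<forall>i<n. \<forall>x t. blockvec blk i t \<longrightarrow>
                  bdual blk B i (bproj blk i (grad (x + t)) - bproj blk i (grad x)) \<le> L i * bnorm B i t"
    and Psi_proper: "\<forall>i<n. (\<forall>t. blockvec blk i t \<longrightarrow> Psi i t \<noteq> -\<infinity>) \<and>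
                             (\<exists>t. blockvec blk i t \<and> Psi i t \<noteq> \<infinity>)"
    and Psi_convex: "\<forall>i<n. \<forall>u v a. blockvec blk i u \<and> blockvec blk i v \<and> 0 \<le> a \<and> a \<le> 1 \<longrightarrow>
                  Psi i (a *\<^sub>R u + (1 - a) *\<^sub>R v) \<le> ereal a * Psi i u + ereal (1 - a) * Psi i v"
    and Psi_closed: "\<forall>i<n. closed {(u, r::real). blockvec blk i u \<and> Psi i u \<le> ereal r}"
    and has_min: "\<exists>xs. \<forall>x. Fobj n blk f Psi xs \<le> Fobj n blk f Psi x"
begin

lemma Tblk_in_block: "i < n \<Longrightarrow> blockvec blk i (Tblk blk B L grad Psi i x)"
  using Psi_proper Psi_convex Psi_closed
  by (intro blockvec_Tblk[where B = B and L = L and Psi = Psi] B_sym B_pd L_pos) auto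

lemma Fstar_finite: "\<exists>s. Fstar n blk f Psi = ereal s"
proof -
  obtain xs where xs: "\<forall>x. Fobj n blk f Psi xs \<le> Fobj n blk f Psi x" using has_min by blast
  then have "Fstar n blk f Psi = Fobj n blk f Psi xs"
    unfolding Fstar_def by (intro antisym INF_lower INF_greatest) auto
  moreover have "Fobj n blk f Psi xs \<noteq> -\<infinity>"
  proof -
    have "Psi j (bproj blk j xs) \<noteq> -\<infinity>" if "j < n" for j
      using Psi_proper that blockvec_bproj by blast
    then have "Psi_sum n blk Psi xs \<noteq> -\<infinity>"
      unfolding Psi_sum_def by (intro sum_ereal_not_MInf) auto
    then show ?thesis by (simp add: Fobj_def)
  qed
  moreover have "Fobj n blk f Psi xs \<noteq> \<infinity>"
  proof -
    obtain t where t: "\<forall>j<n. blockvec blk j (t j) \<and> Psi j (t j) \<noteq> \<infinity>"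
      using Psi_proper by metis
    then have "Psi_sum n blk Psi (\<Sum>l<n. t l) \<noteq> \<infinity>"
      by (auto simp: Psi_sum_def bproj_sum_blockvecs sum_Pinfty)
    then have "Fobj n blk f Psi (\<Sum>l<n. t l) \<noteq> \<infinity>" by (simp add: Fobj_def)
    then show ?thesis using xs by (metis ereal_infty_less_eq(1))
  qed
  ultimately show ?thesis by (cases "Fobj n blk f Psi xs") auto
qed

lemma expected_step_bound:
  "ereal (1 / real n) *
     (\<Sum>i<n. Fobj n blk f Psi (x + Tblk blk B L grad Psi i x) - Fstar n blk f Psi)
   \<le> ereal (1 / real n) * (Hfun n blk B L f grad Psi x (Tfull n blk B L grad Psi x) - Fstar n blk f Psi)
     + ereal ((real n - 1) / real n) * (Fobj n blk f Psi x - Fstar n blk f Psi)"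
proof -
  define t where "t i = Tblk blk B L grad Psi i x" for i
  have t: "\<forall>i<n. blockvec blk i (t i)" by (simp add: t_def Tblk_in_block)
  define d where "d j = bproj blk j (grad x) \<bullet> t j + L j / 2 * (bnorm B j (t j))\<^sup>2" for j
  have descent: "f (x + t i) \<le> f x + d i" if "i < n" for i
    using block_descent[of blk i B, OF B_sym B_pd] that f_grad f_lip t by (simp add: d_def add.assoc)
  have F_step: "Fobj n blk f Psi (x + t i) = ereal (f (x + t i))
      + (Psi i (bproj blk i x + t i) + (\<Sum>j\<in>{..<n}-{i}. Psi j (bproj blk j x)))" if "i < n" for i
    using Psi_sum_add_blockvec[of blk i "t i" n] t that by (simp add: Fobj_def)
  obtain s where "Fstar n blk f Psi = ereal s" using Fstar_finite by blast
  then show ?thesis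
    using average_block_update_le[OF n_pos, of "\<lambda>i. f (x + t i)" "f x" d
        "\<lambda>i. Psi i (bproj blk i x + t i)" "\<lambda>j. Psi j (bproj blk j x)" s] descent F_step
    by (simp add: Tfull_def Hfun_sum_blockvecs[OF t] Fobj_def Psi_sum_def d_def flip: t_def)
qed

end

theorem lemma2:
  fixes n :: nat and blk :: "'N::finite \<Rightarrow> nat" and B :: "nat \<Rightarrow> real^'N^'N"
    and L :: "nat \<Rightarrow> real" and f :: "real^'N \<Rightarrow> real" and grad :: "real^'N \<Rightarrow> real^'N"
    and Psi :: "nat \<Rightarrow> real^'N \<Rightarrow> ereal" and x0 :: "real^'N"
    and idx :: "nat \<Rightarrow> nat" and k :: nat
  assumes n_pos: "n > 0"
    and blk_range: "\<forall>j. blk j < n"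
    and B_sym: "\<forall>i<n. \<forall>j l. blk j = i \<longrightarrow> blk l = i \<longrightarrow> B i $ j $ l = B i $ l $ j"
    and B_pd: "\<forall>i<n. \<forall>t. blockvec blk i t \<and> t \<noteq> 0 \<longrightarrow> (B i *v t) \<bullet> t > 0"
    and L_pos: "\<forall>i<n. L i > 0"
    and f_convex: "convex_on UNIV f"
    and f_grad: "\<forall>x. (f has_derivative (\<lambda>h. grad x \<bullet> h)) (at x)"
    and f_lip: "\<forall>i<n. \<forall>x t. blockvec blk i t \<longrightarrow>
                  bdual blk B i (bproj blk i (grad (x + t)) - bproj blk i (grad x)) \<le> L i * bnorm B i t"
    and Psi_proper: "\<forall>i<n. (\<forall>t. blockvec blk i t \<longrightarrow> Psi i t \<noteq> -\<infinity>) \<and>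
                             (\<exists>t. blockvec blk i t \<and> Psi i t \<noteq> \<infinity>)"
    and Psi_convex: "\<forall>i<n. \<forall>u v a. blockvec blk i u \<and> blockvec blk i v \<and> 0 \<le> a \<and> a \<le> 1 \<longrightarrow>
                  Psi i (a *\<^sub>R u + (1 - a) *\<^sub>R v) \<le> ereal a * Psi i u + ereal (1 - a) * Psi i v"
    and Psi_closed: "\<forall>i<n. closed {(u, r::real). blockvec blk i u \<and> Psi i u \<le> ereal r}"
    and has_min: "\<exists>xs. \<forall>x. Fobj n blk f Psi xs \<le> Fobj n blk f Psi x"
    and idx_range: "\<forall>j. idx j < n"
  shows "(let xk = ucdc blk B L grad Psi x0 idx k;
              Fs = Fstar n blk f Psi;
              F = Fobj n blk f Psi
          in ereal (1 / real n) *
               (\<Sum>i<n. F (ucdc blk B L grad Psi x0 (idx(k := i)) (Suc k)) - Fs)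
             \<le> ereal (1 / real n) * (Hfun n blk B L f grad Psi xk (Tfull n blk B L grad Psi xk) - Fs)
               + ereal ((real n - 1) / real n) * (F xk - Fs))"
proof -
  interpret block_composite n blk B L f grad Psi
    using assms by unfold_locales (auto simp: block_symmetric_def block_posdef_def)
  show ?thesis
    unfolding Let_def ucdc_update_Suc by (rule expected_step_bound)
qed

end
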